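(* Let $1\le p<\infty$, let $K\subset\mathbb R^n$ be an origin-symmetric convex body, and let $f\in L^p(\mathbb R^n)$ satisfy $f=0$ a.e. outside $rK$ for some $r>0$. For $\lambda>0$ let $$H^+_{\lambda,K}=\left\{(x,y)\in\mathbb R^n\times\mathbb R^n:\ \|y\|_K>\|x\|_K,\ \frac{|f(x)-f(y)|}{\|x-y\|_K^{\frac np}}\ge\lambda\right\}.$$ Then for every $\lambda>0$, $$\frac{|K|}{\lambda^p}\|f\|^p_{L^p(\mathbb R^n)}-|K|^2r^{2n}\le\mathcal L^{2n}(H^+_{\lambda,K})\le\frac{|K|}{\lambda^p}\|f\|^p_{L^p(\mathbb R^n)}+|K|^2r^{2n},$$ and moreover $\mathcal L^{2n}(\widetilde E_{\lambda,K})=2\,\mathcal L^{2n}(H^+_{\lambda,K})$, where $\widetilde E_{\lambda,K}=\{(x,y): x\ne y,\ |f(x)-f(y)|\,\|x-y\|_K^{-n/p}\ge\lambda\}$.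
   Context: A convex body is a compact convex subset of $\mathbb R^n$ with non-empty interior; origin-symmetric means $K=-K$. $\|x\|_K=\inf\{\lambda\ge 0: x\in\lambda K\}$ is the Minkowski functional (a norm), $rK=\{rx:x\in K\}$, $|K|$ is the volume of $K$, and $\mathcal L^{2n}$ is Lebesgue measure on $\mathbb R^n\times\mathbb R^n$. *)

theory Defs
  imports "HOL-Analysis.Analysis"
begin

definition mink_norm :: "'a::real_normed_vector set \<Rightarrow> 'a \<Rightarrow> real" where
  "mink_norm K x = Inf {t. t \<ge> 0 \<and> x \<in> (\<lambda>z. t *\<^sub>R z) ` K}"

definition sym_convex_body :: "'a::euclidean_space set \<Rightarrow> bool" where
  "sym_convex_body K \<longleftrightarrow> compact K \<and> convex K \<and> interior K \<noteq> {} \<and> uminus ` K = K"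

end

theory Submission
  imports Defs
begin

text \<open>
  Fix \<open>x\<close> and consider the section of \<open>H\<^sup>+\<close> at \<open>x\<close>. If \<open>y\<close> lies outside \<open>r K\<close>, then \<open>f y = 0\<close>
  and \<open>\<parallel>y\<parallel>\<^sub>K > r\<close>, so for \<open>x \<in> r K\<close> the point \<open>y\<close> belongs to the section iff
  \<open>\<parallel>x - y\<parallel>\<^sub>K \<le> (\<bar>f x\<bar> / \<lambda>)\<^bsup>p/n\<^esup>\<close>, a \<open>K\<close>-ball of volume \<open>|K| \<bar>f x\<bar>\<^sup>p / \<lambda>\<^sup>p\<close>; for \<open>x \<notin> r K\<close>
  both the section and that ball are empty. Integrating over \<open>x\<close> gives \<open>|K| \<parallel>f\<parallel>\<^sub>p\<^sup>p / \<lambda>\<^sup>p\<close>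
  up to an error of at most \<open>|r K|\<^sup>2\<close>. For the identity, \<open>H\<^sup>-\<close> is the image of \<open>H\<^sup>+\<close> under
  \<open>(x, y) \<mapsto> (y, x)\<close> because \<open>K = -K\<close>, and the rest of \<open>E\<close> lies in \<open>{\<parallel>x\<parallel>\<^sub>K = \<parallel>y\<parallel>\<^sub>K}\<close>,
  which is null since the level sets of the gauge are boundaries of convex sets. Replacing \<open>f\<close>
  by a Borel function equal to it almost everywhere changes none of these measures.
\<close>

section \<open>The gauge of a convex body\<close>

lemma mem_scaleR_image_iff:
  fixes K :: "'a::real_vector set"
  assumes "0 \<in> K"
  shows "x \<in> (\<lambda>z. t *\<^sub>R z) ` K \<longleftrightarrow> (t = 0 \<and> x = 0) \<or> (t \<noteq> 0 \<and> x /\<^sub>R t \<in> K)"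
  using assms by (cases "t = 0") (auto simp: image_iff intro!: bexI[of _ "x /\<^sub>R t"])

locale gauge_body =
  fixes K :: "'a::euclidean_space set"
  assumes compact: "compact K" and convex: "convex K" and zero_interior: "0 \<in> interior K"
begin

abbreviation N :: "'a \<Rightarrow> real" where "N \<equiv> mink_norm K"

lemma zero_mem: "0 \<in> K"
  using zero_interior interior_subset by blast

lemma scaleR_mem_of_le_one: "y \<in> K \<Longrightarrow> 0 \<le> u \<Longrightarrow> u \<le> 1 \<Longrightarrow> u *\<^sub>R y \<in> K"
  using convexD[OF convex, of y 0 u "1 - u"] zero_mem by auto

lemma scales_nonempty: "{t. t \<ge> 0 \<and> x \<in> (\<lambda>z. t *\<^sub>R z) ` K} \<noteq> {}"
proof -
  obtain \<delta> where \<delta>: "\<delta> > 0" "cball 0 \<delta> \<subseteq> K"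
    using zero_interior mem_interior_cball by blast
  have "norm x / \<delta> \<in> {t. t \<ge> 0 \<and> x \<in> (\<lambda>z. t *\<^sub>R z) ` K}"
  proof (cases "x = 0")
    case False
    then have "x /\<^sub>R (norm x / \<delta>) \<in> cball 0 \<delta>"
      using \<delta> by simp
    then show ?thesis
      using \<delta> False by (auto simp: mem_scaleR_image_iff[OF zero_mem])
  qed (use zero_mem in auto)
  then show ?thesis by blast
qed

lemma mink_norm_nonneg: "N x \<ge> 0"
  unfolding mink_norm_def using scales_nonempty by (auto intro!: cInf_greatest)

lemma mink_norm_le: "t \<ge> 0 \<Longrightarrow> x \<in> (\<lambda>z. t *\<^sub>R z) ` K \<Longrightarrow> N x \<le> t"
  unfolding mink_norm_def by (rule cInf_lower) (auto intro: bdd_belowI[of _ 0])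

lemma mink_norm_zero [simp]: "N 0 = 0"
  using mink_norm_le[of 0 0] mink_norm_nonneg[of 0] zero_mem by auto

lemma mink_norm_less_imp_mem: assumes "N x < s" shows "x /\<^sub>R s \<in> K"
proof -
  have "bdd_below {t. t \<ge> 0 \<and> x \<in> (\<lambda>z. t *\<^sub>R z) ` K}"
    by (auto intro: bdd_belowI[of _ 0])
  then obtain s' where s': "s' \<ge> 0" "x \<in> (\<lambda>z. s' *\<^sub>R z) ` K" "s' < s"
    using assms cInf_less_iff[OF scales_nonempty] unfolding mink_norm_def by blast
  show ?thesis
  proof (cases "s' = 0")
    case True
    then show ?thesis using s' zero_mem by auto
  next
    case False
    then have "x /\<^sub>R s' \<in> K"
      using s' by (auto simp: mem_scaleR_image_iff[OF zero_mem])
    moreover have "x /\<^sub>R s = (s' / s) *\<^sub>R (x /\<^sub>R s')"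
      using False by (simp add: inverse_eq_divide)
    ultimately show ?thesis
      using scaleR_mem_of_le_one[of "x /\<^sub>R s'" "s' / s"] s' by auto
  qed
qed

lemma mink_norm_le_iff: assumes t: "t > 0" shows "N x \<le> t \<longleftrightarrow> x /\<^sub>R t \<in> K"
proof
  assume "x /\<^sub>R t \<in> K"
  then show "N x \<le> t"
    using t mink_norm_le[of t x] by (auto simp: mem_scaleR_image_iff[OF zero_mem])
next
  assume "N x \<le> t"
  then have "\<forall>\<^sub>F s in at_right t. x /\<^sub>R s \<in> K"
    by (intro eventually_mono[OF eventually_at_right_less[of t]] mink_norm_less_imp_mem) auto
  moreover have "((\<lambda>s. x /\<^sub>R s) \<longlongrightarrow> x /\<^sub>R t) (at_right t)"
    using t by (intro tendsto_intros) auto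
  ultimately show "x /\<^sub>R t \<in> K"
    using compact_imp_closed[OF compact] by (intro Lim_in_closed_set) auto
qed

lemma mink_sublevel_eq: "t > 0 \<Longrightarrow> {x. N x \<le> t} = (\<lambda>z. t *\<^sub>R z) ` K"
  using mink_norm_le_iff by (auto simp: mem_scaleR_image_iff[OF zero_mem])

lemma mink_norm_pos: assumes "x \<noteq> 0" shows "N x > 0"
proof (rule ccontr)
  obtain R where R: "R > 0" "\<forall>y\<in>K. norm y \<le> R"
    using compact_imp_bounded[OF compact] bounded_pos by blast
  assume "\<not> N x > 0"
  then have "x /\<^sub>R (norm x / (2 * R)) \<in> K"
    using mink_norm_le_iff[of "norm x / (2 * R)"] mink_norm_nonneg[of x] assms R by force
  then show False
    using R assms by fastforce
qed

lemma mink_norm_eq_0_iff [simp]: "N x = 0 \<longleftrightarrow> x = 0"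
  using mink_norm_pos by fastforce

lemma mink_norm_le_0_iff [simp]: "N x \<le> 0 \<longleftrightarrow> x = 0"
  using mink_norm_nonneg[of x] mink_norm_eq_0_iff[of x] by linarith

lemma mink_norm_minus: assumes "uminus ` K = K" shows "N (- x) = N x"
proof -
  have "- x \<in> (\<lambda>z. t *\<^sub>R z) ` K \<longleftrightarrow> x \<in> (\<lambda>z. t *\<^sub>R z) ` (uminus ` K)" for t
    by (auto simp: image_iff) (metis minus_minus)+
  then show ?thesis
    using assms unfolding mink_norm_def by simp
qed

lemma borel_measurable_mink_norm [measurable]: "N \<in> borel_measurable borel"
proof -
  have "{x. N x \<le> t} \<in> sets borel" for t
  proof (cases "t > 0")
    case True
    have "compact ((\<lambda>z. t *\<^sub>R z) ` K)"
      by (intro compact_continuous_image compact continuous_intros)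
    then show ?thesis
      using True by (simp add: mink_sublevel_eq borel_compact)
  next
    case False
    have "N x \<le> t \<longleftrightarrow> t = 0 \<and> x = 0" for x
      using False mink_norm_nonneg[of x] mink_norm_le_0_iff[of x] by (smt (verit))
    then have "{x. N x \<le> t} = (if t = 0 then {0} else {})"
      by auto
    then show ?thesis by simp
  qed
  then show ?thesis
    by (simp add: borel_measurable_iff_le)
qed

abbreviation vol :: real where "vol \<equiv> measure lborel K"

lemma mink_ball_eq:
  assumes t: "t > 0" shows "{y. N (y - x) \<le> t} = (\<lambda>z. t *\<^sub>R z + x) ` K"
proof -
  have "N (y - x) \<le> t \<longleftrightarrow> y \<in> (\<lambda>z. t *\<^sub>R z + x) ` K" for y
  proof -
    have "y = t *\<^sub>R ((y - x) /\<^sub>R t) + x"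
      using t by simp
    then show ?thesis
      using t by (auto simp: mink_norm_le_iff image_iff intro: bexI[of _ "(y - x) /\<^sub>R t"])
  qed
  then show ?thesis by blast
qed

lemma emeasure_mink_ball:
  assumes t: "t \<ge> 0" shows "emeasure lborel {y. N (y - x) \<le> t} = ennreal (t ^ DIM('a) * vol)"
proof (cases "t = 0")
  case True
  then have "{y. N (y - x) \<le> t} = {x}"
    by auto
  then show ?thesis using True by simp
next
  case False
  then have t: "t > 0" using t by simp
  have "(\<lambda>z. t *\<^sub>R z + x) ` K \<in> sets borel"
    by (intro borel_compact compact_continuous_image compact continuous_intros)
  moreover have "emeasure lebesgue ((\<lambda>z. t *\<^sub>R z + x) ` K) = t ^ DIM('a) * emeasure lebesgue K"
    using emeasure_lebesgue_affine[of t x K] t by simp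
  moreover have "emeasure lborel K = ennreal vol"
    using emeasure_compact_finite[OF compact] by (simp add: emeasure_eq_ennreal_measure)
  ultimately show ?thesis
    using t by (simp add: mink_ball_eq ennreal_mult ennreal_power borel_compact compact)
qed

text \<open>A point \<open>y\<close> of the interior of \<open>c K\<close> could be pushed outwards to \<open>u y\<close> with \<open>u > 1\<close>,
  forcing \<open>N y \<le> c / u < c\<close>.\<close>
lemma mink_level_subset_frontier:
  assumes c: "c > 0" shows "{y. N y = c} \<subseteq> frontier ((\<lambda>z. c *\<^sub>R z) ` K)"
proof
  let ?S = "(\<lambda>z. c *\<^sub>R z) ` K"
  have S: "?S = {x. N x \<le> c}"
    using mink_sublevel_eq[OF c] by simp
  fix y assume "y \<in> {y. N y = c}"
  then have y: "N y = c" by simp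
  have "closed ?S"
    by (intro compact_imp_closed compact_continuous_image compact continuous_intros)
  moreover have "y \<in> ?S"
    unfolding S using y by simp
  moreover have "y \<notin> interior ?S"
  proof
    assume "y \<in> interior ?S"
    then obtain e where e: "e > 0" "ball y e \<subseteq> ?S"
      by (auto simp: mem_interior)
    have "y \<noteq> 0"
      using y c by (intro notI) simp
    define u where "u = 1 + e / (2 * norm y)"
    have u: "u > 1"
      using e \<open>y \<noteq> 0\<close> by (simp add: u_def)
    have "dist y (u *\<^sub>R y) = norm ((e / (2 * norm y)) *\<^sub>R y)"
      unfolding dist_commute[of y] dist_norm u_def by (simp add: scaleR_add_left)
    also have "\<dots> = e / 2"
      using \<open>y \<noteq> 0\<close> e by simp
    finally have "u *\<^sub>R y \<in> ?S"
      using e by auto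
    then have "N (u *\<^sub>R y) \<le> c"
      unfolding S by simp
    then have "y /\<^sub>R (c / u) \<in> K"
      using c u by (simp add: mink_norm_le_iff divide_inverse_commute mult.commute)
    then have "N y \<le> c / u"
      using c u by (simp add: mink_norm_le_iff)
    also have "\<dots> < c"
      using c u by (simp add: divide_less_eq)
    finally show False
      using y by simp
  qed
  ultimately show "y \<in> frontier ?S"
    by (simp add: frontier_def)
qed

lemma mink_level_set_null: "{y. N y = c} \<in> null_sets lborel"
proof -
  consider "c < 0" | "c = 0" | "c > 0" by linarith
  then show ?thesis
  proof cases
    case 1
    then have "N y \<noteq> c" for y
      using mink_norm_nonneg[of y] by linarith
    then show ?thesis by simp
  next
    case 2
    then show ?thesis by (simp add: finite_imp_null_set_lborel)
  next
    case 3
    have "negligible (frontier ((\<lambda>z. c *\<^sub>R z) ` K))"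
      by (intro negligible_convex_frontier convex_scaling convex)
    then have "{y. N y = c} \<in> null_sets lebesgue"
      by (intro null_sets_subset[OF _ _ mink_level_subset_frontier[OF 3]])
        (auto simp: negligible_iff_null_sets)
    then show ?thesis
      by (simp add: null_sets_completion_iff)
  qed
qed

end

section \<open>Counting pairs with a large difference quotient\<close>

lemma sets_pair_lborel_Collect:
  assumes "Measurable.pred (lborel \<Otimes>\<^sub>M lborel) (\<lambda>z. P (fst z) (snd z))"
  shows "{(x, y). P x y} \<in> sets (lborel \<Otimes>\<^sub>M lborel)"
proof -
  have "{(x, y). P x y} = {z \<in> space (lborel \<Otimes>\<^sub>M lborel). P (fst z) (snd z)}"
    by (auto simp: space_pair_measure)
  also have "\<dots> \<in> sets (lborel \<Otimes>\<^sub>M lborel)"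
    using assms by measurable
  finally show ?thesis .
qed

lemma emeasure_le_add_of_eq_outside:
  assumes "A \<in> sets M" "B \<in> sets M" "D \<in> sets M" "\<And>y. y \<notin> D \<Longrightarrow> y \<in> A \<longleftrightarrow> y \<in> B"
  shows "emeasure M A \<le> emeasure M B + emeasure M D"
proof -
  have "emeasure M A \<le> emeasure M (B \<union> D)"
    using assms by (intro emeasure_mono) auto
  also have "\<dots> \<le> emeasure M B + emeasure M D"
    using assms by (intro emeasure_subadditive)
  finally show ?thesis .
qed

lemma le_divide_powr_iff:
  fixes m q lam a :: real
  assumes m: "m > 0" and lam: "lam > 0" and q: "q \<ge> 0" and a: "a > 0"
  shows "lam \<le> q / m powr a \<longleftrightarrow> m \<le> (q / lam) powr (1 / a)"
proof -
  have powr_mono_iff: "x \<le> y \<longleftrightarrow> x powr c \<le> y powr c" if "c > 0" "x \<ge> 0" "y \<ge> 0" for x y c :: real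
    using that by (meson linorder_not_le powr_less_mono2 powr_mono2 less_imp_le)
  have "lam \<le> q / m powr a \<longleftrightarrow> m powr a \<le> q / lam"
    using m lam by (simp add: pos_le_divide_eq mult.commute)
  also have "\<dots> \<longleftrightarrow> (m powr a) powr (1 / a) \<le> (q / lam) powr (1 / a)"
    using a q lam by (intro powr_mono_iff) auto
  also have "(m powr a) powr (1 / a) = m"
    using a m by (simp add: powr_powr)
  finally show ?thesis .
qed

locale supported_Lp_function = gauge_body K for K :: "'a::euclidean_space set" +
  fixes g :: "'a \<Rightarrow> real" and r p lam :: real
  assumes symmetric: "uminus ` K = K"
    and borel_measurable_g [measurable]: "g \<in> borel_measurable borel"
    and integrable_Lp: "integrable lborel (\<lambda>x. \<bar>g x\<bar> powr p)"
    and vanishes_outside: "\<And>x. N x > r \<Longrightarrow> g x = 0"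
    and r_pos: "r > 0" and p_ge_1: "p \<ge> 1" and lam_pos: "lam > 0"
begin

text \<open>On the diagonal the quotient is \<open>0\<close>, since \<open>N 0 = 0\<close>, \<open>0 powr s = 0\<close> and \<open>t / 0 = 0\<close>;
  so \<open>large_quotient x x\<close> never holds.\<close>
definition large_quotient :: "'a \<Rightarrow> 'a \<Rightarrow> bool" where
  "large_quotient x y \<longleftrightarrow> lam \<le> \<bar>g x - g y\<bar> / N (x - y) powr (real DIM('a) / p)"

definition H_plus :: "('a \<times> 'a) set" where
  "H_plus = {(x, y). N x < N y \<and> large_quotient x y}"

definition H_minus :: "('a \<times> 'a) set" where
  "H_minus = {(x, y). N y < N x \<and> large_quotient x y}"

definition E :: "('a \<times> 'a) set" where
  "E = {(x, y). large_quotient x y}"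

lemma E_eq: "E = {(x, y). x \<noteq> y \<and> \<bar>g x - g y\<bar> * N (x - y) powr (- (real DIM('a) / p)) \<ge> lam}"
  using lam_pos by (auto simp: E_def large_quotient_def powr_minus_divide)

lemma large_quotient_commute: "large_quotient y x \<longleftrightarrow> large_quotient x y"
  using mink_norm_minus[OF symmetric, of "x - y"] by (simp add: large_quotient_def abs_minus_commute)

lemma H_plus_sets [measurable]: "H_plus \<in> sets (lborel \<Otimes>\<^sub>M lborel)"
  unfolding H_plus_def large_quotient_def by (rule sets_pair_lborel_Collect) measurable

lemma H_minus_sets [measurable]: "H_minus \<in> sets (lborel \<Otimes>\<^sub>M lborel)"
  unfolding H_minus_def large_quotient_def by (rule sets_pair_lborel_Collect) measurable

lemma E_sets [measurable]: "E \<in> sets (lborel \<Otimes>\<^sub>M lborel)"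
  unfolding E_def large_quotient_def by (rule sets_pair_lborel_Collect) measurable

text \<open>What the section of \<open>H_plus\<close> at \<open>x\<close> would be if \<open>g\<close> vanished at the second point: it agrees
  with the true section outside \<open>r K\<close>, and it is an \<open>N\<close>-ball around \<open>x\<close>.\<close>
definition quotient_ball :: "'a \<Rightarrow> 'a set" where
  "quotient_ball x = {y. lam \<le> \<bar>g x\<bar> / N (x - y) powr (real DIM('a) / p)}"

lemma quotient_ball_eq:
  "quotient_ball x = {y. N (y - x) \<le> (\<bar>g x\<bar> / lam) powr (p / real DIM('a))} - {x}"
proof -
  have "y \<in> quotient_ball x \<longleftrightarrow> N (y - x) \<le> (\<bar>g x\<bar> / lam) powr (p / real DIM('a)) \<and> y \<noteq> x" for y
  proof (cases "y = x")
    case False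
    have "N (y - x) > 0"
      using False mink_norm_pos by simp
    moreover have "real DIM('a) / p > 0"
      using p_ge_1 by simp
    ultimately have "lam \<le> \<bar>g x\<bar> / N (y - x) powr (real DIM('a) / p)
        \<longleftrightarrow> N (y - x) \<le> (\<bar>g x\<bar> / lam) powr (p / real DIM('a))"
      using le_divide_powr_iff[of "N (y - x)" lam "\<bar>g x\<bar>" "real DIM('a) / p"] lam_pos by simp
    moreover have "N (x - y) = N (y - x)"
      using mink_norm_minus[OF symmetric, of "y - x"] by simp
    ultimately show ?thesis
      using False by (simp add: quotient_ball_def)
  next
    case True
    then show ?thesis
      using lam_pos by (simp add: quotient_ball_def)
  qed
  then show ?thesis by auto
qed

lemma emeasure_quotient_ball:
  "emeasure lborel (quotient_ball x) = ennreal (vol / lam powr p * \<bar>g x\<bar> powr p)"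
proof -
  let ?q = "\<bar>g x\<bar> / lam"
  have "emeasure lborel (quotient_ball x) = emeasure lborel {y. N (y - x) \<le> ?q powr (p / DIM('a))}"
    unfolding quotient_ball_eq by (rule emeasure_Diff_null_set) (auto simp: finite_imp_null_set_lborel)
  also have "\<dots> = ennreal ((?q powr (p / DIM('a))) ^ DIM('a) * vol)"
    by (rule emeasure_mink_ball) simp
  also have "(?q powr (p / DIM('a))) ^ DIM('a) * vol = vol / lam powr p * \<bar>g x\<bar> powr p"
    using lam_pos p_ge_1 by (simp add: powr_realpow'[symmetric] powr_powr powr_divide)
  finally show ?thesis .
qed

lemma section_H_plus_iff_quotient_ball:
  assumes "\<not> (N x \<le> r \<and> N y \<le> r)"
  shows "y \<in> Pair x -` H_plus \<longleftrightarrow> y \<in> quotient_ball x"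
proof (cases "N x \<le> r")
  case True
  then have "N x < N y" "g y = 0"
    using assms vanishes_outside[of y] by auto
  then show ?thesis
    by (simp add: H_plus_def large_quotient_def quotient_ball_def)
next
  case False
  then have "g x = 0" "N x < N y \<Longrightarrow> g y = 0"
    using vanishes_outside by auto
  then show ?thesis
    using lam_pos by (auto simp: H_plus_def large_quotient_def quotient_ball_def)
qed

lemma emeasure_pairs_in_ball:
  "emeasure lborel {y. N x \<le> r \<and> N y \<le> r} = indicator {y. N y \<le> r} x * ennreal (r ^ DIM('a) * vol)"
  using emeasure_mink_ball[of r 0] r_pos by (simp add: indicator_def)

lemma emeasure_section_H_plus_le:
  "emeasure lborel (Pair x -` H_plus)
    \<le> emeasure lborel (quotient_ball x) + indicator {y. N y \<le> r} x * ennreal (r ^ DIM('a) * vol)"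
  unfolding emeasure_pairs_in_ball[symmetric]
proof (rule emeasure_le_add_of_eq_outside)
  show "y \<in> Pair x -` H_plus \<longleftrightarrow> y \<in> quotient_ball x" if "y \<notin> {y. N x \<le> r \<and> N y \<le> r}" for y
    using that by (intro section_H_plus_iff_quotient_ball) simp
qed (use sets_Pair1[OF H_plus_sets, of x] in \<open>auto simp: quotient_ball_def\<close>)

lemma emeasure_quotient_ball_le:
  "emeasure lborel (quotient_ball x)
    \<le> emeasure lborel (Pair x -` H_plus) + indicator {y. N y \<le> r} x * ennreal (r ^ DIM('a) * vol)"
  unfolding emeasure_pairs_in_ball[symmetric]
proof (rule emeasure_le_add_of_eq_outside)
  show "y \<in> quotient_ball x \<longleftrightarrow> y \<in> Pair x -` H_plus" if "y \<notin> {y. N x \<le> r \<and> N y \<le> r}" for y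
    using that by (intro section_H_plus_iff_quotient_ball[symmetric]) simp
qed (use sets_Pair1[OF H_plus_sets, of x] in \<open>auto simp: quotient_ball_def\<close>)

lemma nn_integral_emeasure_quotient_ball:
  "(\<integral>\<^sup>+x. emeasure lborel (quotient_ball x) \<partial>lborel)
    = ennreal (vol / lam powr p * (\<integral>x. \<bar>g x\<bar> powr p \<partial>lborel))"
  unfolding emeasure_quotient_ball
  using integrable_Lp by (subst nn_integral_eq_integral) auto

lemma nn_integral_indicator_ball:
  "(\<integral>\<^sup>+x. indicator {y. N y \<le> r} x * ennreal (r ^ DIM('a) * vol) \<partial>lborel)
    = ennreal (vol\<^sup>2 * r ^ (2 * DIM('a)))"
  using emeasure_mink_ball[of r 0] r_pos
  by (simp add: nn_integral_multc ennreal_mult[symmetric] power2_eq_square power_mult power_mult_distrib)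

lemma emeasure_H_plus:
  "emeasure (lborel \<Otimes>\<^sub>M lborel) H_plus = (\<integral>\<^sup>+x. emeasure lborel (Pair x -` H_plus) \<partial>lborel)"
  by (rule lborel.emeasure_pair_measure_alt[OF H_plus_sets])

lemma emeasure_H_plus_le:
  "emeasure (lborel \<Otimes>\<^sub>M lborel) H_plus
    \<le> ennreal (vol / lam powr p * (\<integral>x. \<bar>g x\<bar> powr p \<partial>lborel) + vol\<^sup>2 * r ^ (2 * DIM('a)))"
proof -
  have "emeasure (lborel \<Otimes>\<^sub>M lborel) H_plus
      \<le> (\<integral>\<^sup>+x. emeasure lborel (quotient_ball x) + indicator {y. N y \<le> r} x * ennreal (r ^ DIM('a) * vol) \<partial>lborel)"
    unfolding emeasure_H_plus by (intro nn_integral_mono emeasure_section_H_plus_le)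
  also have "\<dots> = (\<integral>\<^sup>+x. emeasure lborel (quotient_ball x) \<partial>lborel)
      + (\<integral>\<^sup>+x. indicator {y. N y \<le> r} x * ennreal (r ^ DIM('a) * vol) \<partial>lborel)"
    by (rule nn_integral_add) (auto simp: emeasure_quotient_ball)
  also have "\<dots> = ennreal (vol / lam powr p * (\<integral>x. \<bar>g x\<bar> powr p \<partial>lborel)) + ennreal (vol\<^sup>2 * r ^ (2 * DIM('a)))"
    by (simp only: nn_integral_emeasure_quotient_ball nn_integral_indicator_ball)
  finally show ?thesis
    by (simp add: ennreal_plus[symmetric] del: ennreal_plus)
qed

lemma emeasure_H_plus_ge:
  "ennreal (vol / lam powr p * (\<integral>x. \<bar>g x\<bar> powr p \<partial>lborel) - vol\<^sup>2 * r ^ (2 * DIM('a)))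
    \<le> emeasure (lborel \<Otimes>\<^sub>M lborel) H_plus"
proof -
  have "ennreal (vol / lam powr p * (\<integral>x. \<bar>g x\<bar> powr p \<partial>lborel))
      \<le> (\<integral>\<^sup>+x. emeasure lborel (Pair x -` H_plus) + indicator {y. N y \<le> r} x * ennreal (r ^ DIM('a) * vol) \<partial>lborel)"
    unfolding nn_integral_emeasure_quotient_ball[symmetric] by (intro nn_integral_mono emeasure_quotient_ball_le)
  also have "\<dots> = emeasure (lborel \<Otimes>\<^sub>M lborel) H_plus
      + (\<integral>\<^sup>+x. indicator {y. N y \<le> r} x * ennreal (r ^ DIM('a) * vol) \<partial>lborel)"
    unfolding emeasure_H_plus
    by (rule nn_integral_add) (auto intro: lborel.measurable_emeasure_Pair[OF H_plus_sets])
  finally have "ennreal (vol / lam powr p * (\<integral>x. \<bar>g x\<bar> powr p \<partial>lborel))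
      \<le> emeasure (lborel \<Otimes>\<^sub>M lborel) H_plus + ennreal (vol\<^sup>2 * r ^ (2 * DIM('a)))"
    by (simp only: nn_integral_indicator_ball)
  then show ?thesis
    by (simp add: ennreal_minus[symmetric] ennreal_minus_le_iff add.commute)
qed

lemma pairs_equal_norm_null: "{(x, y). N x = N y} \<in> null_sets (lborel \<Otimes>\<^sub>M lborel)"
proof -
  have sets: "{(x, y). N x = N y} \<in> sets (lborel \<Otimes>\<^sub>M lborel)"
    by (rule sets_pair_lborel_Collect) measurable
  have "Pair x -` {(x, y). N x = N y} = {y. N y = N x}" for x
    by auto
  then have "emeasure (lborel \<Otimes>\<^sub>M lborel) {(x, y). N x = N y} = 0"
    by (simp add: lborel.emeasure_pair_measure_alt[OF sets] null_setsD1[OF mink_level_set_null])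
  then show ?thesis
    using sets by (simp add: null_sets_def)
qed

lemma emeasure_H_minus: "emeasure (lborel \<Otimes>\<^sub>M lborel) H_minus = emeasure (lborel \<Otimes>\<^sub>M lborel) H_plus"
proof -
  have "emeasure (lborel \<Otimes>\<^sub>M lborel) H_plus
      = emeasure (distr (lborel \<Otimes>\<^sub>M lborel) (lborel \<Otimes>\<^sub>M lborel) (\<lambda>(x, y). (y, x))) H_plus"
    by (simp flip: lborel_pair.distr_pair_swap)
  also have "\<dots> = emeasure (lborel \<Otimes>\<^sub>M lborel) ((\<lambda>(x, y). (y, x)) -` H_plus \<inter> space (lborel \<Otimes>\<^sub>M lborel))"
    by (rule emeasure_distr) (auto intro: measurable_pair_swap' simp del: sets_lborel)
  also have "(\<lambda>(x, y). (y, x)) -` H_plus \<inter> space (lborel \<Otimes>\<^sub>M lborel) = H_minus"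
    by (auto simp: H_plus_def H_minus_def space_pair_measure large_quotient_commute)
  finally show ?thesis by simp
qed

lemma emeasure_E: "emeasure (lborel \<Otimes>\<^sub>M lborel) E = 2 * emeasure (lborel \<Otimes>\<^sub>M lborel) H_plus"
proof -
  have "AE z in lborel \<Otimes>\<^sub>M lborel. z \<in> E \<longleftrightarrow> z \<in> H_plus \<union> H_minus"
    using AE_not_in[OF pairs_equal_norm_null]
    by eventually_elim (auto simp: E_def H_plus_def H_minus_def)
  then have "emeasure (lborel \<Otimes>\<^sub>M lborel) E = emeasure (lborel \<Otimes>\<^sub>M lborel) (H_plus \<union> H_minus)"
    by (rule emeasure_eq_AE) (use E_sets H_plus_sets H_minus_sets in auto)
  also have "\<dots> = emeasure (lborel \<Otimes>\<^sub>M lborel) H_plus + emeasure (lborel \<Otimes>\<^sub>M lborel) H_minus"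
    by (rule plus_emeasure[symmetric, OF H_plus_sets H_minus_sets]) (auto simp: H_plus_def H_minus_def)
  finally show ?thesis
    by (simp add: emeasure_H_minus mult_2)
qed

end

section \<open>Reduction to Borel functions\<close>

lemma gauge_body_if_sym_convex_body:
  assumes "sym_convex_body K" shows "gauge_body K"
proof
  show K: "compact K" "convex K"
    using assms by (auto simp: sym_convex_body_def)
  obtain a where a: "a \<in> interior K"
    using assms by (auto simp: sym_convex_body_def)
  have "- a \<in> interior K"
    using a interior_negations[of K] assms by (auto simp: sym_convex_body_def)
  then have "(1 / 2) *\<^sub>R a + (1 / 2) *\<^sub>R (- a) \<in> interior K"
    using a convex_interior[OF K(2)] by (intro convexD) auto
  then show "0 \<in> interior K"
    by simp
qed

lemma (in gauge_body) borel_representative_vanishing_outside: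
  fixes f :: "'a \<Rightarrow> real"
  assumes f: "f \<in> borel_measurable lebesgue" and r: "r > 0"
    and vanish: "AE x in lebesgue. x \<notin> (\<lambda>z. r *\<^sub>R z) ` K \<longrightarrow> f x = 0"
  obtains g where "g \<in> borel_measurable borel" "\<And>x. N x > r \<Longrightarrow> g x = 0" "AE x in lborel. f x = g x"
proof -
  obtain g0 where g0: "g0 \<in> borel_measurable lborel" "AE x in lborel. f x = g0 x"
    using completion_ex_borel_measurable_real[OF f] by blast
  have "AE x in lborel. N x > r \<longrightarrow> f x = 0"
    using vanish r by (simp add: AE_completion_iff mink_sublevel_eq[symmetric] not_le)
  with g0(2) have "AE x in lborel. f x = (if N x \<le> r then g0 x else 0)"
    by eventually_elim auto
  moreover have "(\<lambda>x. if N x \<le> r then g0 x else 0) \<in> borel_measurable borel"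
    using g0(1) by measurable
  ultimately show ?thesis
    by (intro that) auto
qed

lemma integral_lebesgue_eq_lborel_AE:
  fixes h k :: "'a::euclidean_space \<Rightarrow> real"
  assumes h: "h \<in> borel_measurable lebesgue" and k: "k \<in> borel_measurable borel"
    and hk: "AE x in lborel. h x = k x"
  shows "integrable lebesgue h \<longleftrightarrow> integrable lborel k"
    and "integral\<^sup>L lebesgue h = integral\<^sup>L lborel k"
proof -
  have hk': "AE x in lebesgue. h x = k x" and k': "k \<in> borel_measurable lebesgue"
    using hk k by (auto simp: AE_completion_iff intro: measurable_completion)
  show "integrable lebesgue h \<longleftrightarrow> integrable lborel k"
    using integrable_cong_AE[OF h k' hk'] integrable_completion[of k lborel] k by simp
  show "integral\<^sup>L lebesgue h = integral\<^sup>L lborel k"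
    using integral_cong_AE[OF h k' hk'] integral_completion[of k lborel] k by simp
qed

lemma emeasure_lebesgue_pairs_cong_AE:
  fixes f g :: "'a::euclidean_space \<Rightarrow> 'b"
  assumes fg: "AE x in lborel. f x = g x"
    and S: "{(x, y). P x y (g x) (g y)} \<in> sets (lborel \<Otimes>\<^sub>M lborel)"
  shows "emeasure lebesgue {(x, y). P x y (f x) (f y)} = emeasure (lborel \<Otimes>\<^sub>M lborel) {(x, y). P x y (g x) (g y)}"
proof -
  let ?S = "{(x, y). P x y (g x) (g y)}" and ?T = "{(x, y). P x y (f x) (f y)}"
  obtain Z where Z: "Z \<in> null_sets lborel" "{x. f x \<noteq> g x} \<subseteq> Z"
    using fg by (elim AE_E) (auto simp: null_sets_def)
  let ?Z = "Z \<times> UNIV \<union> UNIV \<times> Z"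
  have Z2: "?Z \<in> null_sets (lborel :: ('a \<times> 'a) measure)"
    using Z(1) unfolding lborel_prod[symmetric] by (intro null_sets.Un) auto
  have S': "?S \<in> sets (lborel :: ('a \<times> 'a) measure)"
    using S unfolding lborel_prod .
  have eq: "z \<in> ?T \<longleftrightarrow> z \<in> ?S" if "z \<notin> ?Z" for z
  proof -
    obtain x y where z: "z = (x, y)" by (cases z)
    then have "f x = g x" "f y = g y"
      using that Z(2) by auto
    then show ?thesis using z by simp
  qed
  have T: "?T \<in> sets lebesgue"
  proof (rule sets_completionI)
    show "?T = (?S - ?Z) \<union> (?T \<inter> ?Z)" using eq by blast
  qed (use Z2 S' in auto)
  have "AE z in lebesgue. z \<notin> ?Z"
    by (rule AE_completion[OF AE_not_in[OF Z2]])
  then have "AE z in lebesgue. z \<in> ?T \<longleftrightarrow> z \<in> ?S"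
    by eventually_elim (rule eq)
  then have "emeasure lebesgue ?T = emeasure lebesgue ?S"
    by (rule emeasure_eq_AE) (use T S' in auto)
  then show ?thesis
    using S' by (simp add: lborel_prod)
qed

theorem mainTheorem5:
  fixes K :: "'a::euclidean_space set" and f :: "'a \<Rightarrow> real"
    and p r lam :: real
  assumes p: "1 \<le> p"
    and K: "sym_convex_body K"
    and f_meas: "f \<in> borel_measurable lebesgue"
    and f_Lp: "integrable lebesgue (\<lambda>x. \<bar>f x\<bar> powr p)"
    and r: "r > 0"
    and supp: "AE x in lebesgue. x \<notin> (\<lambda>z. r *\<^sub>R z) ` K \<longrightarrow> f x = 0"
    and lam: "lam > 0"
  shows "ennreal (measure lebesgue K / lam powr p * (\<integral>x. \<bar>f x\<bar> powr p \<partial>lebesgue)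
              - (measure lebesgue K)\<^sup>2 * r ^ (2 * DIM('a)))
           \<le> emeasure (lebesgue :: ('a \<times> 'a) measure)
               {(x, y). mink_norm K y > mink_norm K x \<and>
                  \<bar>f x - f y\<bar> / mink_norm K (x - y) powr (real DIM('a) / p) \<ge> lam}
       \<and> emeasure (lebesgue :: ('a \<times> 'a) measure)
               {(x, y). mink_norm K y > mink_norm K x \<and>
                  \<bar>f x - f y\<bar> / mink_norm K (x - y) powr (real DIM('a) / p) \<ge> lam}
           \<le> ennreal (measure lebesgue K / lam powr p * (\<integral>x. \<bar>f x\<bar> powr p \<partial>lebesgue)
              + (measure lebesgue K)\<^sup>2 * r ^ (2 * DIM('a)))
       \<and> emeasure (lebesgue :: ('a \<times> 'a) measure)
               {(x, y). x \<noteq> y \<and>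
                  \<bar>f x - f y\<bar> * mink_norm K (x - y) powr (- (real DIM('a) / p)) \<ge> lam}
         = 2 * emeasure (lebesgue :: ('a \<times> 'a) measure)
               {(x, y). mink_norm K y > mink_norm K x \<and>
                  \<bar>f x - f y\<bar> / mink_norm K (x - y) powr (real DIM('a) / p) \<ge> lam}"
proof -
  interpret gauge_body K
    using K by (rule gauge_body_if_sym_convex_body)
  obtain g where g: "g \<in> borel_measurable borel" "\<And>x. mink_norm K x > r \<Longrightarrow> g x = 0"
      "AE x in lborel. f x = g x"
    using borel_representative_vanishing_outside[OF f_meas r supp] by blast
  have Lp_ae: "AE x in lborel. \<bar>f x\<bar> powr p = \<bar>g x\<bar> powr p"
    using g(3) by eventually_elim simp
  have "(\<lambda>x. \<bar>f x\<bar> powr p) \<in> borel_measurable lebesgue" "(\<lambda>x. \<bar>g x\<bar> powr p) \<in> borel_measurable borel"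
    using f_meas g(1) by measurable
  note Lp_eq = integral_lebesgue_eq_lborel_AE[OF this Lp_ae]
  interpret supported_Lp_function K g r p lam
    using K g(1,2) f_Lp r p lam Lp_eq(1)
    by unfold_locales (auto simp: sym_convex_body_def)
  have H: "emeasure lebesgue {(x, y). mink_norm K y > mink_norm K x \<and>
      \<bar>f x - f y\<bar> / mink_norm K (x - y) powr (real DIM('a) / p) \<ge> lam}
      = emeasure (lborel \<Otimes>\<^sub>M lborel) H_plus"
    using emeasure_lebesgue_pairs_cong_AE[where P = "\<lambda>x y u v. N x < N y \<and>
      lam \<le> \<bar>u - v\<bar> / N (x - y) powr (real DIM('a) / p)",
      OF g(3) H_plus_sets[unfolded H_plus_def large_quotient_def]]
    by (simp add: H_plus_def large_quotient_def)
  have E: "emeasure lebesgue {(x, y). x \<noteq> y \<and>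
      \<bar>f x - f y\<bar> * mink_norm K (x - y) powr (- (real DIM('a) / p)) \<ge> lam}
      = emeasure (lborel \<Otimes>\<^sub>M lborel) E"
    using emeasure_lebesgue_pairs_cong_AE[where P = "\<lambda>x y u v. x \<noteq> y \<and>
      lam \<le> \<bar>u - v\<bar> * N (x - y) powr (- (real DIM('a) / p))",
      OF g(3) E_sets[unfolded E_eq]]
    by (simp add: E_eq)
  have "measure lebesgue K = vol"
    using compact by (simp add: borel_compact)
  then show ?thesis
    using emeasure_H_plus_ge emeasure_H_plus_le emeasure_E Lp_eq(2)
    by (simp add: H E)
qed

end
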